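(* Let $R$ be a ring and $M$ any $R$-module. There exists an inverse system of $R$-modules $(D_\alpha,g_{\alpha\beta}\mid\alpha\le\beta<\aleph_1)$ indexed by $\aleph_1$ (with the ordinal order) in which every $g_{\alpha\beta}$ is surjective, each $D_\alpha$ is a direct sum of copies of $M$, and $\varprojlim_{\alpha<\aleph_1}D_\alpha=0$. In particular, if $M\neq 0$, this inverse system is Mittag-Leffler but not strict Mittag-Leffler.
   Context: An inverse system $(D_i,g_{ij})$ with inverse limit $(D,g_i)$ is Mittag-Leffler if for each $i$ there is $j\ge i$ with $\operatorname{Im} g_{ij}=\operatorname{Im} g_{ik}$ for all $k\ge j$, and strict Mittag-Leffler if for each $i$ there is $j\ge i$ with $\operatorname{Im} g_{ij}=\operatorname{Im} g_i$. *)

theory Defs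
  imports "HOL-Algebra.Module" "HOL-Library.Countable_Set"
begin

text \<open>HOL-Algebra's locale module requires a commutative ring; we use the same
axioms over an arbitrary ring.\<close>

locale left_module = R?: ring R + M?: abelian_group M for R (structure) and M (structure) +
  assumes smult_closed [simp, intro]:
      "\<lbrakk> a \<in> carrier R; x \<in> carrier M \<rbrakk> \<Longrightarrow> a \<odot>\<^bsub>M\<^esub> x \<in> carrier M"
    and smult_l_distr:
      "\<lbrakk> a \<in> carrier R; b \<in> carrier R; x \<in> carrier M \<rbrakk> \<Longrightarrow>
      (a \<oplus> b) \<odot>\<^bsub>M\<^esub> x = a \<odot>\<^bsub>M\<^esub> x \<oplus>\<^bsub>M\<^esub> b \<odot>\<^bsub>M\<^esub> x"
    and smult_r_distr:
      "\<lbrakk> a \<in> carrier R; x \<in> carrier M; y \<in> carrier M \<rbrakk> \<Longrightarrow>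
      a \<odot>\<^bsub>M\<^esub> (x \<oplus>\<^bsub>M\<^esub> y) = a \<odot>\<^bsub>M\<^esub> x \<oplus>\<^bsub>M\<^esub> a \<odot>\<^bsub>M\<^esub> y"
    and smult_assoc1:
      "\<lbrakk> a \<in> carrier R; b \<in> carrier R; x \<in> carrier M \<rbrakk> \<Longrightarrow>
      (a \<otimes> b) \<odot>\<^bsub>M\<^esub> x = a \<odot>\<^bsub>M\<^esub> (b \<odot>\<^bsub>M\<^esub> x)"
    and smult_one [simp]:
      "x \<in> carrier M \<Longrightarrow> \<one> \<odot>\<^bsub>M\<^esub> x = x"

definition lmod_hom :: "('a, 'm) ring_scheme \<Rightarrow> ('a, 'b, 'c) module_scheme
    \<Rightarrow> ('a, 'd, 'e) module_scheme \<Rightarrow> ('b \<Rightarrow> 'd) set" where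
  "lmod_hom R M N = {f. f \<in> carrier M \<rightarrow> carrier N
     \<and> (\<forall>x\<in>carrier M. \<forall>y\<in>carrier M. f (x \<oplus>\<^bsub>M\<^esub> y) = f x \<oplus>\<^bsub>N\<^esub> f y)
     \<and> (\<forall>a\<in>carrier R. \<forall>x\<in>carrier M. f (a \<odot>\<^bsub>M\<^esub> x) = a \<odot>\<^bsub>N\<^esub> f x)}"

text \<open>The multiplicative fields of the record are irrelevant for a module.\<close>

definition dsum_copies :: "'c set \<Rightarrow> ('a, 'b, 'e) module_scheme \<Rightarrow> ('a, 'c \<Rightarrow> 'b) module" where
  "dsum_copies X M =
    \<lparr> carrier = {f. (\<forall>x\<in>X. f x \<in> carrier M) \<and> (\<forall>x. x \<notin> X \<longrightarrow> f x = \<zero>\<^bsub>M\<^esub>)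
                   \<and> finite {x. f x \<noteq> \<zero>\<^bsub>M\<^esub>}},
      monoid.mult = (\<lambda>f g. undefined), one = undefined,
      zero = (\<lambda>x. \<zero>\<^bsub>M\<^esub>),
      add = (\<lambda>f g x. f x \<oplus>\<^bsub>M\<^esub> g x),
      smult = (\<lambda>a f x. a \<odot>\<^bsub>M\<^esub> f x) \<rparr>"

definition inverse_system ::
  "('a, 'm) ring_scheme \<Rightarrow> ('i::order \<Rightarrow> ('a, 'b, 'c) module_scheme) \<Rightarrow> ('i \<Rightarrow> 'i \<Rightarrow> 'b \<Rightarrow> 'b) \<Rightarrow> bool" where
  "inverse_system R D g \<longleftrightarrow>
     (\<forall>i. left_module R (D i))
   \<and> (\<forall>i j. i \<le> j \<longrightarrow> g i j \<in> lmod_hom R (D j) (D i))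
   \<and> (\<forall>i. \<forall>x\<in>carrier (D i). g i i x = x)
   \<and> (\<forall>i j k. i \<le> j \<longrightarrow> j \<le> k \<longrightarrow> (\<forall>x\<in>carrier (D k). g i j (g j k x) = g i k x))"

definition inv_limit :: "('i::order \<Rightarrow> ('a, 'b, 'c) module_scheme) \<Rightarrow> ('i \<Rightarrow> 'i \<Rightarrow> 'b \<Rightarrow> 'b) \<Rightarrow> ('i \<Rightarrow> 'b) set" where
  "inv_limit D g = {x. (\<forall>i. x i \<in> carrier (D i)) \<and> (\<forall>i j. i \<le> j \<longrightarrow> g i j (x j) = x i)}"

definition inv_limit_zero :: "('i::order \<Rightarrow> ('a, 'b, 'c) module_scheme) \<Rightarrow> ('i \<Rightarrow> 'i \<Rightarrow> 'b \<Rightarrow> 'b) \<Rightarrow> bool" where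
  "inv_limit_zero D g \<longleftrightarrow> inv_limit D g = {(\<lambda>i. \<zero>\<^bsub>D i\<^esub>)}"

definition mittag_leffler :: "('i::order \<Rightarrow> ('a, 'b, 'c) module_scheme) \<Rightarrow> ('i \<Rightarrow> 'i \<Rightarrow> 'b \<Rightarrow> 'b) \<Rightarrow> bool" where
  "mittag_leffler D g \<longleftrightarrow>
     (\<forall>i. \<exists>j\<ge>i. \<forall>k\<ge>j. g i j ` carrier (D j) = g i k ` carrier (D k))"

definition strict_mittag_leffler :: "('i::order \<Rightarrow> ('a, 'b, 'c) module_scheme) \<Rightarrow> ('i \<Rightarrow> 'i \<Rightarrow> 'b \<Rightarrow> 'b) \<Rightarrow> bool" where
  "strict_mittag_leffler D g \<longleftrightarrow>
     (\<forall>i. \<exists>j\<ge>i. g i j ` carrier (D j) = (\<lambda>x. x i) ` inv_limit D g)"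

end

theory Submission
  imports Defs
begin

text \<open>Take for \<open>D\<^sub>\<alpha>\<close> the direct sum of copies of \<open>M\<close> indexed by the injections
\<open>\<alpha> \<rightarrow> \<nat>\<close> with infinite coimage, and for \<open>g\<^sub>\<alpha>\<^sub>\<beta>\<close> the map induced by restricting injections
from \<open>\<beta>\<close> to \<open>\<alpha>\<close>. Since \<open>\<beta>\<close> is countable and the coimage infinite, every injection on \<open>\<alpha>\<close>
extends to \<open>\<beta>\<close>, so the \<open>g\<^sub>\<alpha>\<^sub>\<beta>\<close> are onto. The supports of a nonzero thread are finite
sets whose cardinality is monotone, hence eventually constant; from then on restriction is a
bijection between supports, so one point of a support lifts to a coherent family of
injections \<open>\<gamma> \<rightarrow> \<nat>\<close> for all large \<open>\<gamma>\<close>. Their union would inject \<open>\<aleph>\<^sub>1\<close> into \<open>\<nat>\<close>.\<close>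

section \<open>Pushforward of finitely supported functions\<close>

definition pushforward :: "('b, 'm) ring_scheme \<Rightarrow> ('x \<Rightarrow> 'y) \<Rightarrow> ('x \<Rightarrow> 'b) \<Rightarrow> 'y \<Rightarrow> 'b" where
  "pushforward G \<phi> h y = finsum G h {z. h z \<noteq> \<zero>\<^bsub>G\<^esub> \<and> \<phi> z = y}"

context abelian_monoid
begin

definition finsupp :: "('x \<Rightarrow> 'a) \<Rightarrow> bool" where
  "finsupp h \<longleftrightarrow> finite {z. h z \<noteq> \<zero>} \<and> (\<forall>z. h z \<in> carrier G)"

lemma pushforward_eq_finsum:
  assumes "finsupp h" "finite A" "{z. h z \<noteq> \<zero>} \<subseteq> A"
  shows "pushforward G \<phi> h y = finsum G h {z\<in>A. \<phi> z = y}"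
  unfolding pushforward_def
  by (rule add.finprod_mono_neutral_cong_left) (use assms in \<open>auto simp: finsupp_def\<close>)

lemma pushforward_empty_fiber:
  "(\<And>z. h z \<noteq> \<zero> \<Longrightarrow> \<phi> z \<noteq> y) \<Longrightarrow> pushforward G \<phi> h y = \<zero>"
proof -
  assume "\<And>z. h z \<noteq> \<zero> \<Longrightarrow> \<phi> z \<noteq> y"
  then have empty: "{z. h z \<noteq> \<zero> \<and> \<phi> z = y} = {}" by blast
  show ?thesis unfolding pushforward_def empty by simp
qed

lemma pushforward_closed: "finsupp h \<Longrightarrow> pushforward G \<phi> h y \<in> carrier G"
  unfolding pushforward_def finsupp_def by (intro finsum_closed) auto

lemma pushforward_support: "{y. pushforward G \<phi> h y \<noteq> \<zero>} \<subseteq> \<phi> ` {z. h z \<noteq> \<zero>}"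
proof (rule subsetI, rule ccontr)
  fix y assume "y \<in> {y. pushforward G \<phi> h y \<noteq> \<zero>}" and "y \<notin> \<phi> ` {z. h z \<noteq> \<zero>}"
  moreover from \<open>y \<notin> _\<close> have "pushforward G \<phi> h y = \<zero>"
    by (intro pushforward_empty_fiber) auto
  ultimately show False by simp
qed

lemma finsupp_pushforward:
  assumes "finsupp h"
  shows "finsupp (pushforward G \<phi> h)"
proof -
  have "finite {y. pushforward G \<phi> h y \<noteq> \<zero>}"
    by (rule finite_subset[OF pushforward_support]) (use assms in \<open>simp add: finsupp_def\<close>)
  then show ?thesis unfolding finsupp_def by (intro conjI allI pushforward_closed[OF assms])
qed

lemma pushforward_add:
  assumes "finsupp h1" "finsupp h2"
  shows "pushforward G \<phi> (\<lambda>z. h1 z \<oplus> h2 z) y = pushforward G \<phi> h1 y \<oplus> pushforward G \<phi> h2 y"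
proof -
  let ?A = "{z. h1 z \<noteq> \<zero>} \<union> {z. h2 z \<noteq> \<zero>}"
  have fin: "finite ?A" using assms by (auto simp: finsupp_def)
  have sub1: "{z. h1 z \<noteq> \<zero>} \<subseteq> ?A" and sub2: "{z. h2 z \<noteq> \<zero>} \<subseteq> ?A" by blast+
  have "{z. h1 z \<oplus> h2 z \<noteq> \<zero>} \<subseteq> ?A" using assms by (auto simp: finsupp_def)
  then have sum: "finsupp (\<lambda>z. h1 z \<oplus> h2 z)"
    using assms fin finite_subset by (auto simp: finsupp_def)
  have "pushforward G \<phi> (\<lambda>z. h1 z \<oplus> h2 z) y = finsum G (\<lambda>z. h1 z \<oplus> h2 z) {z\<in>?A. \<phi> z = y}"
    by (rule pushforward_eq_finsum[OF sum fin]) (use assms in \<open>auto simp: finsupp_def\<close>)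
  also have "\<dots> = finsum G h1 {z\<in>?A. \<phi> z = y} \<oplus> finsum G h2 {z\<in>?A. \<phi> z = y}"
    by (rule finsum_addf) (use assms in \<open>auto simp: finsupp_def\<close>)
  also have "\<dots> = pushforward G \<phi> h1 y \<oplus> pushforward G \<phi> h2 y"
    by (simp only: pushforward_eq_finsum[OF assms(1) fin sub1] pushforward_eq_finsum[OF assms(2) fin sub2])
  finally show ?thesis .
qed

lemma pushforward_pushforward:
  assumes "finsupp h"
  shows "pushforward G \<psi> (pushforward G \<phi> h) y = pushforward G (\<psi> \<circ> \<phi>) h y"
proof -
  let ?S = "{z. h z \<noteq> \<zero>}"
  let ?fiber = "\<lambda>w. {z\<in>?S. \<phi> z = w}"
  have fin: "finite ?S" using assms by (auto simp: finsupp_def)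
  have "pushforward G \<psi> (pushforward G \<phi> h) y = finsum G (pushforward G \<phi> h) {w\<in>\<phi> ` ?S. \<psi> w = y}"
    by (rule pushforward_eq_finsum[OF finsupp_pushforward[OF assms]])
      (use fin pushforward_support[of \<phi> h] in blast)+
  also have "\<dots> = finsum G (\<lambda>w. finsum G h (?fiber w)) {w\<in>\<phi> ` ?S. \<psi> w = y}"
    by (rule finsum_cong')
      (use pushforward_eq_finsum[OF assms fin] assms in \<open>auto simp: finsupp_def intro!: finsum_closed\<close>)
  also have "\<dots> = finsum G h (\<Union>(?fiber ` {w\<in>\<phi> ` ?S. \<psi> w = y}))"
    by (rule add.finprod_UN_disjoint[symmetric])
      (use fin assms in \<open>auto simp: finsupp_def pairwise_def disjnt_def\<close>)
  also have "\<dots> = pushforward G (\<psi> \<circ> \<phi>) h y"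
  proof -
    have "\<Union>(?fiber ` {w\<in>\<phi> ` ?S. \<psi> w = y}) = {z. h z \<noteq> \<zero> \<and> (\<psi> \<circ> \<phi>) z = y}"
      by auto
    then show ?thesis unfolding pushforward_def by (rule arg_cong)
  qed
  finally show ?thesis .
qed

lemma pushforward_fixing_support:
  assumes "finsupp h" "\<And>z. h z \<noteq> \<zero> \<Longrightarrow> \<phi> z = z"
  shows "pushforward G \<phi> h = h"
proof
  fix y show "pushforward G \<phi> h y = h y"
  proof (cases "h y = \<zero>")
    case True
    have "pushforward G \<phi> h y = \<zero>" using True assms(2) by (intro pushforward_empty_fiber) auto
    with True show ?thesis by simp
  next
    case False
    then have "{z. h z \<noteq> \<zero> \<and> \<phi> z = y} = {y}" using assms(2) by auto
    then show ?thesis using assms(1) by (simp add: pushforward_def finsupp_def finsum_singleton)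
  qed
qed

end

context left_module
begin

lemma smult_r_null: "a \<in> carrier R \<Longrightarrow> a \<odot>\<^bsub>M\<^esub> \<zero>\<^bsub>M\<^esub> = \<zero>\<^bsub>M\<^esub>"
  using smult_r_distr[of a "\<zero>\<^bsub>M\<^esub>" "\<zero>\<^bsub>M\<^esub>"] M.add.l_cancel_one' by simp

lemma finsum_smult:
  assumes "finite A" "a \<in> carrier R" "f \<in> A \<rightarrow> carrier M"
  shows "finsum M (\<lambda>z. a \<odot>\<^bsub>M\<^esub> f z) A = a \<odot>\<^bsub>M\<^esub> finsum M f A"
  using assms(1,3)
proof (induction A rule: finite_induct)
  case empty
  then show ?case using assms(2) by (simp add: smult_r_null)
next
  case (insert x F)
  then have fx: "f x \<in> carrier M" and fF: "f \<in> F \<rightarrow> carrier M" by auto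
  have "finsum M (\<lambda>z. a \<odot>\<^bsub>M\<^esub> f z) (insert x F) = a \<odot>\<^bsub>M\<^esub> f x \<oplus>\<^bsub>M\<^esub> a \<odot>\<^bsub>M\<^esub> finsum M f F"
    using insert fx fF assms(2) by (subst M.finsum_insert) auto
  also have "\<dots> = a \<odot>\<^bsub>M\<^esub> finsum M f (insert x F)"
    using insert fx fF assms(2) by (simp add: smult_r_distr)
  finally show ?case .
qed

lemma pushforward_smult:
  assumes h: "M.finsupp h" and a: "a \<in> carrier R"
  shows "pushforward M \<phi> (\<lambda>z. a \<odot>\<^bsub>M\<^esub> h z) y = a \<odot>\<^bsub>M\<^esub> pushforward M \<phi> h y"
proof -
  let ?A = "{z. h z \<noteq> \<zero>\<^bsub>M\<^esub>}"
  have fin: "finite ?A" using h by (auto simp: M.finsupp_def)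
  have sub: "{z. a \<odot>\<^bsub>M\<^esub> h z \<noteq> \<zero>\<^bsub>M\<^esub>} \<subseteq> ?A" using smult_r_null[OF a] by auto
  have "M.finsupp (\<lambda>z. a \<odot>\<^bsub>M\<^esub> h z)"
    using finite_subset[OF sub fin] h a by (auto simp: M.finsupp_def)
  then have "pushforward M \<phi> (\<lambda>z. a \<odot>\<^bsub>M\<^esub> h z) y = finsum M (\<lambda>z. a \<odot>\<^bsub>M\<^esub> h z) {z\<in>?A. \<phi> z = y}"
    by (rule M.pushforward_eq_finsum) (use fin sub in auto)
  also have "\<dots> = a \<odot>\<^bsub>M\<^esub> finsum M h {z\<in>?A. \<phi> z = y}"
    by (rule finsum_smult) (use fin h a in \<open>auto simp: M.finsupp_def\<close>)
  finally show ?thesis by (simp add: pushforward_def)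
qed

end

section \<open>Direct sums of copies of a module\<close>

lemma dsum_carrier: "h \<in> carrier (dsum_copies X M) \<longleftrightarrow>
   (\<forall>x\<in>X. h x \<in> carrier M) \<and> (\<forall>x. x \<notin> X \<longrightarrow> h x = \<zero>\<^bsub>M\<^esub>) \<and> finite {x. h x \<noteq> \<zero>\<^bsub>M\<^esub>}"
  by (simp add: dsum_copies_def)

lemma dsum_simps [simp]:
  "\<zero>\<^bsub>dsum_copies X M\<^esub> = (\<lambda>x. \<zero>\<^bsub>M\<^esub>)"
  "f \<oplus>\<^bsub>dsum_copies X M\<^esub> g = (\<lambda>x. f x \<oplus>\<^bsub>M\<^esub> g x)"
  "a \<odot>\<^bsub>dsum_copies X M\<^esub> f = (\<lambda>x. a \<odot>\<^bsub>M\<^esub> f x)"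
  by (simp_all add: dsum_copies_def)

context left_module
begin

lemma finsupp_dsum: "h \<in> carrier (dsum_copies X M) \<Longrightarrow> M.finsupp h"
  by (auto simp: dsum_carrier M.finsupp_def)

lemma dsum_support: "h \<in> carrier (dsum_copies X M) \<Longrightarrow> h z \<noteq> \<zero>\<^bsub>M\<^esub> \<Longrightarrow> z \<in> X"
  by (auto simp: dsum_carrier)

lemma abelian_group_dsum: "abelian_group (dsum_copies X M)"
proof (rule abelian_groupI)
  fix x y assume "x \<in> carrier (dsum_copies X M)" "y \<in> carrier (dsum_copies X M)"
  moreover have "{z. x z \<oplus>\<^bsub>M\<^esub> y z \<noteq> \<zero>\<^bsub>M\<^esub>} \<subseteq> {z. x z \<noteq> \<zero>\<^bsub>M\<^esub>} \<union> {z. y z \<noteq> \<zero>\<^bsub>M\<^esub>}"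
    by auto
  ultimately show "x \<oplus>\<^bsub>dsum_copies X M\<^esub> y \<in> carrier (dsum_copies X M)"
    by (auto simp: dsum_carrier intro: finite_subset)
next
  fix x y z assume "x \<in> carrier (dsum_copies X M)" "y \<in> carrier (dsum_copies X M)"
    "z \<in> carrier (dsum_copies X M)"
  then show "x \<oplus>\<^bsub>dsum_copies X M\<^esub> y \<oplus>\<^bsub>dsum_copies X M\<^esub> z =
      x \<oplus>\<^bsub>dsum_copies X M\<^esub> (y \<oplus>\<^bsub>dsum_copies X M\<^esub> z)"
    by (auto simp: dsum_carrier fun_eq_iff) (metis M.a_assoc M.zero_closed)
next
  fix x y assume "x \<in> carrier (dsum_copies X M)" "y \<in> carrier (dsum_copies X M)"
  then show "x \<oplus>\<^bsub>dsum_copies X M\<^esub> y = y \<oplus>\<^bsub>dsum_copies X M\<^esub> x"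
    by (auto simp: dsum_carrier fun_eq_iff) (metis M.a_comm)
next
  fix x assume "x \<in> carrier (dsum_copies X M)"
  then show "\<zero>\<^bsub>dsum_copies X M\<^esub> \<oplus>\<^bsub>dsum_copies X M\<^esub> x = x"
    by (auto simp: dsum_carrier fun_eq_iff) (metis M.l_zero M.zero_closed)
next
  fix x assume x: "x \<in> carrier (dsum_copies X M)"
  let ?y = "\<lambda>z. \<ominus>\<^bsub>M\<^esub> x z"
  have "{z. ?y z \<noteq> \<zero>\<^bsub>M\<^esub>} \<subseteq> {z. x z \<noteq> \<zero>\<^bsub>M\<^esub>}" using x by (auto simp: dsum_carrier)
  then have "?y \<in> carrier (dsum_copies X M)" using x by (auto simp: dsum_carrier intro: finite_subset)
  moreover have "?y \<oplus>\<^bsub>dsum_copies X M\<^esub> x = \<zero>\<^bsub>dsum_copies X M\<^esub>"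
    using x by (auto simp: dsum_carrier fun_eq_iff) (metis M.l_neg M.zero_closed)
  ultimately show "\<exists>y\<in>carrier (dsum_copies X M). y \<oplus>\<^bsub>dsum_copies X M\<^esub> x = \<zero>\<^bsub>dsum_copies X M\<^esub>"
    by blast
qed (auto simp: dsum_carrier)

lemma left_module_dsum: "left_module R (dsum_copies X M)"
proof (intro left_module.intro left_module_axioms.intro R.ring_axioms abelian_group_dsum)
  fix a x assume a: "a \<in> carrier R" and x: "x \<in> carrier (dsum_copies X M)"
  have "{z. a \<odot>\<^bsub>M\<^esub> x z \<noteq> \<zero>\<^bsub>M\<^esub>} \<subseteq> {z. x z \<noteq> \<zero>\<^bsub>M\<^esub>}" using smult_r_null[OF a] by auto
  then show "a \<odot>\<^bsub>dsum_copies X M\<^esub> x \<in> carrier (dsum_copies X M)"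
    using x a smult_r_null[OF a] by (auto simp: dsum_carrier intro: finite_subset)
next
  fix a b x assume "a \<in> carrier R" "b \<in> carrier R" "x \<in> carrier (dsum_copies X M)"
  then show "(a \<oplus>\<^bsub>R\<^esub> b) \<odot>\<^bsub>dsum_copies X M\<^esub> x =
      a \<odot>\<^bsub>dsum_copies X M\<^esub> x \<oplus>\<^bsub>dsum_copies X M\<^esub> b \<odot>\<^bsub>dsum_copies X M\<^esub> x"
    by (auto simp: dsum_carrier fun_eq_iff) (metis M.zero_closed smult_l_distr)
next
  fix a x y assume "a \<in> carrier R" "x \<in> carrier (dsum_copies X M)" "y \<in> carrier (dsum_copies X M)"
  then show "a \<odot>\<^bsub>dsum_copies X M\<^esub> (x \<oplus>\<^bsub>dsum_copies X M\<^esub> y) =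
      a \<odot>\<^bsub>dsum_copies X M\<^esub> x \<oplus>\<^bsub>dsum_copies X M\<^esub> a \<odot>\<^bsub>dsum_copies X M\<^esub> y"
    by (auto simp: dsum_carrier fun_eq_iff) (metis M.zero_closed smult_r_distr)
next
  fix a b x assume "a \<in> carrier R" "b \<in> carrier R" "x \<in> carrier (dsum_copies X M)"
  then show "(a \<otimes>\<^bsub>R\<^esub> b) \<odot>\<^bsub>dsum_copies X M\<^esub> x = a \<odot>\<^bsub>dsum_copies X M\<^esub> (b \<odot>\<^bsub>dsum_copies X M\<^esub> x)"
    by (auto simp: dsum_carrier fun_eq_iff) (metis M.zero_closed smult_assoc1)
next
  fix x assume "x \<in> carrier (dsum_copies X M)"
  then show "\<one>\<^bsub>R\<^esub> \<odot>\<^bsub>dsum_copies X M\<^esub> x = x"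
    by (auto simp: dsum_carrier fun_eq_iff) (metis M.zero_closed smult_one)
qed

lemma dsum_nontrivial:
  assumes "x \<in> X" and "carrier M \<noteq> {\<zero>\<^bsub>M\<^esub>}"
  shows "carrier (dsum_copies X M) \<noteq> {\<zero>\<^bsub>dsum_copies X M\<^esub>}"
proof
  assume trivial: "carrier (dsum_copies X M) = {\<zero>\<^bsub>dsum_copies X M\<^esub>}"
  have "m = \<zero>\<^bsub>M\<^esub>" if "m \<in> carrier M" for m
  proof -
    have "(\<lambda>z. if z = x then m else \<zero>\<^bsub>M\<^esub>) \<in> carrier (dsum_copies X M)"
      using assms(1) that by (auto simp: dsum_carrier)
    then have "(\<lambda>z. if z = x then m else \<zero>\<^bsub>M\<^esub>) = (\<lambda>z. \<zero>\<^bsub>M\<^esub>)" using trivial by simp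
    from fun_cong[OF this, of x] show ?thesis by simp
  qed
  then have "carrier M \<subseteq> {\<zero>\<^bsub>M\<^esub>}" by blast
  with M.zero_closed assms(2) show False by blast
qed

lemma pushforward_in_dsum:
  assumes "\<And>z. z \<in> X \<Longrightarrow> \<phi> z \<in> Y" and h: "h \<in> carrier (dsum_copies X M)"
  shows "pushforward M \<phi> h \<in> carrier (dsum_copies Y M)"
proof -
  have "pushforward M \<phi> h y = \<zero>\<^bsub>M\<^esub>" if "y \<notin> Y" for y
    using that assms dsum_support[OF h] by (intro M.pushforward_empty_fiber) blast
  then show ?thesis
    using M.finsupp_pushforward[OF finsupp_dsum[OF h]] by (auto simp: dsum_carrier M.finsupp_def)
qed

lemma pushforward_lmod_hom:
  assumes "\<And>z. z \<in> X \<Longrightarrow> \<phi> z \<in> Y"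
  shows "pushforward M \<phi> \<in> lmod_hom R (dsum_copies X M) (dsum_copies Y M)"
  unfolding lmod_hom_def dsum_simps
proof (intro CollectI conjI ballI funcsetI ext)
  fix h assume "h \<in> carrier (dsum_copies X M)"
  with assms show "pushforward M \<phi> h \<in> carrier (dsum_copies Y M)" by (rule pushforward_in_dsum)
next
  fix h k y assume "h \<in> carrier (dsum_copies X M)" "k \<in> carrier (dsum_copies X M)"
  then show "pushforward M \<phi> (\<lambda>z. h z \<oplus>\<^bsub>M\<^esub> k z) y = pushforward M \<phi> h y \<oplus>\<^bsub>M\<^esub> pushforward M \<phi> k y"
    by (intro M.pushforward_add finsupp_dsum)
next
  fix a h y assume "a \<in> carrier R" "h \<in> carrier (dsum_copies X M)"
  then show "pushforward M \<phi> (\<lambda>z. a \<odot>\<^bsub>M\<^esub> h z) y = a \<odot>\<^bsub>M\<^esub> pushforward M \<phi> h y"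
    by (intro pushforward_smult finsupp_dsum)
qed

lemma pushforward_onto_dsum:
  assumes into: "\<And>z. z \<in> X \<Longrightarrow> \<phi> z \<in> Y" and onto: "\<And>y. y \<in> Y \<Longrightarrow> \<exists>z\<in>X. \<phi> z = y"
  shows "pushforward M \<phi> ` carrier (dsum_copies X M) = carrier (dsum_copies Y M)"
proof
  show "pushforward M \<phi> ` carrier (dsum_copies X M) \<subseteq> carrier (dsum_copies Y M)"
    by (rule image_subsetI) (rule pushforward_in_dsum[OF into])
next
  have "\<forall>y\<in>Y. \<exists>z. z \<in> X \<and> \<phi> z = y" using onto by blast
  then have "\<exists>s. \<forall>y\<in>Y. s y \<in> X \<and> \<phi> (s y) = y" by (rule bchoice)
  then obtain s where s: "\<forall>y\<in>Y. s y \<in> X \<and> \<phi> (s y) = y" by blast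
  show "carrier (dsum_copies Y M) \<subseteq> pushforward M \<phi> ` carrier (dsum_copies X M)"
  proof
    fix k assume k: "k \<in> carrier (dsum_copies Y M)"
    \<comment> \<open>a preimage of \<open>k\<close> is its pushforward along a section of \<open>\<phi>\<close>\<close>
    have preimage: "pushforward M s k \<in> carrier (dsum_copies X M)"
      using s by (intro pushforward_in_dsum[OF _ k]) blast
    have "pushforward M \<phi> (pushforward M s k) = pushforward M (\<phi> \<circ> s) k"
      by (rule ext) (rule M.pushforward_pushforward[OF finsupp_dsum[OF k]])
    also have "\<dots> = k"
      using s dsum_support[OF k] by (intro M.pushforward_fixing_support finsupp_dsum[OF k]) auto
    finally have "k = pushforward M \<phi> (pushforward M s k)" by (rule sym)
    with preimage show "k \<in> pushforward M \<phi> ` carrier (dsum_copies X M)" by blast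
  qed
qed

end

section \<open>Injections of initial segments into the naturals\<close>

definition restrict_below :: "'i::linorder \<Rightarrow> ('i \<Rightarrow> nat option) \<Rightarrow> 'i \<Rightarrow> nat option" where
  "restrict_below \<alpha> z = (\<lambda>a. if a < \<alpha> then z a else None)"

definition coinfinite_injections :: "'i::linorder \<Rightarrow> ('i \<Rightarrow> nat option) set" where
  "coinfinite_injections \<alpha> = {f. (\<forall>a. f a \<noteq> None \<longleftrightarrow> a < \<alpha>) \<and> inj_on f {a. a < \<alpha>}
                                \<and> infinite (- {n. \<exists>a. f a = Some n})}"

lemma restrict_below_restrict_below:
  "\<alpha> \<le> \<beta> \<Longrightarrow> restrict_below \<alpha> (restrict_below \<beta> z) = restrict_below \<alpha> z"
  by (auto simp: restrict_below_def fun_eq_iff dest: less_le_trans)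

lemma restrict_below_coinfinite_injection:
  "z \<in> coinfinite_injections \<alpha> \<Longrightarrow> restrict_below \<alpha> z = z"
  by (auto simp: restrict_below_def coinfinite_injections_def fun_eq_iff)

lemma restrict_below_in_coinfinite_injections:
  assumes z: "z \<in> coinfinite_injections \<beta>" and "\<alpha> \<le> \<beta>"
  shows "restrict_below \<alpha> z \<in> coinfinite_injections \<alpha>"
proof -
  have below: "{a. a < \<alpha>} \<subseteq> {a. a < \<beta>}" using \<open>\<alpha> \<le> \<beta>\<close> by auto
  have "inj_on z {a. a < \<beta>}" using z by (simp add: coinfinite_injections_def)
  then have "inj_on z {a. a < \<alpha>}" using below by (rule inj_on_subset)
  then have "inj_on (restrict_below \<alpha> z) {a. a < \<alpha>}" by (auto simp: inj_on_def restrict_below_def)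
  moreover have "- {n. \<exists>a. z a = Some n} \<subseteq> - {n. \<exists>a. restrict_below \<alpha> z a = Some n}"
    by (auto simp: restrict_below_def split: if_splits)
  then have "infinite (- {n. \<exists>a. restrict_below \<alpha> z a = Some n})"
    by (rule infinite_super) (use z in \<open>simp add: coinfinite_injections_def\<close>)
  moreover have "restrict_below \<alpha> z a \<noteq> None \<longleftrightarrow> a < \<alpha>" for a
    using z below by (auto simp: coinfinite_injections_def restrict_below_def)
  ultimately show ?thesis by (simp add: coinfinite_injections_def)
qed

lemma coinfinite_injection_extends:
  fixes f :: "'i::linorder \<Rightarrow> nat option"
  assumes f: "f \<in> coinfinite_injections \<alpha>" and "\<alpha> \<le> \<beta>" and "countable {a. a < \<beta>}"
  shows "\<exists>z\<in>coinfinite_injections \<beta>. restrict_below \<alpha> z = f"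
proof -
  let ?old = "{a. a < \<alpha>}" and ?new = "{a. \<alpha> \<le> a \<and> a < \<beta>}"
  have dom_f: "f a \<noteq> None \<longleftrightarrow> a < \<alpha>" for a using f by (simp add: coinfinite_injections_def)
  have "infinite (- {n. \<exists>a. f a = Some n})" using f by (simp add: coinfinite_injections_def)
  then obtain e :: "nat \<Rightarrow> nat" where e: "inj e" "range e \<subseteq> - {n. \<exists>a. f a = Some n}"
    using infinite_countable_subset by blast
  obtain c :: "'i \<Rightarrow> nat" where c: "inj_on c ?new"
    using countable_subset[OF _ \<open>countable {a. a < \<beta>}\<close>, of ?new] by (auto elim: countableE)
  \<comment> \<open>the new points get the even-indexed free labels, the odd-indexed ones stay free\<close>
  define z where "z a = (if a < \<alpha> then f a else if a < \<beta> then Some (e (2 * c a)) else None)" for a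
  have "z a \<noteq> None \<longleftrightarrow> a < \<beta>" for a
    using dom_f \<open>\<alpha> \<le> \<beta>\<close> by (auto simp: z_def dest: less_le_trans)
  moreover have "inj_on z {a. a < \<beta>}"
  proof -
    have "{a. a < \<beta>} = ?old \<union> ?new" using \<open>\<alpha> \<le> \<beta>\<close> by (auto simp: not_less dest: less_le_trans)
    moreover have "inj_on z ?old" using f by (auto simp: z_def inj_on_def coinfinite_injections_def)
    moreover have "inj_on z ?new"
      using c inj_eq[OF e(1)] by (auto simp: z_def inj_on_def not_less[symmetric])
    moreover have "z ` ?old \<inter> z ` ?new = {}"
      using e(2) by (auto simp: z_def not_less[symmetric])
    ultimately show ?thesis by (auto simp: inj_on_Un)
  qed
  moreover have "infinite (- {n. \<exists>a. z a = Some n})"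
  proof (rule infinite_super)
    show "range (\<lambda>k. e (2 * k + 1)) \<subseteq> - {n. \<exists>a. z a = Some n}"
      using e inj_eq[OF e(1)] by (auto simp: z_def split: if_splits) presburger+
    show "infinite (range (\<lambda>k. e (2 * k + 1)))"
      by (rule range_inj_infinite) (auto simp: inj_def inj_eq[OF e(1)])
  qed
  ultimately have "z \<in> coinfinite_injections \<beta>" by (simp add: coinfinite_injections_def)
  moreover have "restrict_below \<alpha> z = f"
    by (auto simp: restrict_below_def z_def fun_eq_iff) (metis dom_f)
  ultimately show ?thesis by blast
qed

lemma coinfinite_injections_nonempty:
  fixes \<alpha> :: "'i::wellorder"
  assumes "countable {a. a < \<alpha>}"
  shows "coinfinite_injections \<alpha> \<noteq> {}"
proof -
  have "{a. a < (LEAST a. True :: 'i)} = {}" using not_less_Least by blast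
  then have "(\<lambda>_. None) \<in> coinfinite_injections (LEAST a. True :: 'i)"
    by (auto simp: coinfinite_injections_def)
  then show ?thesis
    using coinfinite_injection_extends[OF _ _ assms] by (metis Least_le empty_iff)
qed

section \<open>Uncountable orders with countable initial segments\<close>

lemma countable_set_bounded:
  fixes B :: "'i::linorder set"
  assumes "\<not> countable (UNIV :: 'i set)" and "\<forall>b::'i. countable {a. a < b}" and "countable B"
  shows "\<exists>\<gamma>. \<forall>b\<in>B. b \<le> \<gamma>"
proof (rule ccontr)
  assume "\<not> ?thesis"
  then have "UNIV = (\<Union>b\<in>B. {a. a < b})" by (auto simp: not_le)
  moreover have "countable (\<Union>b\<in>B. {a. a < b})" using assms(2,3) by auto
  ultimately show False using assms(1) by simp
qed

lemma exists_greater: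
  fixes \<delta> :: "'i::linorder"
  assumes "\<not> countable (UNIV :: 'i set)" and "\<forall>b::'i. countable {a. a < b}"
  shows "\<exists>\<gamma>. \<delta> < \<gamma>"
proof (rule ccontr)
  assume "\<not> ?thesis"
  then have "UNIV = insert \<delta> {a. a < \<delta>}" by (auto simp: not_less order.order_iff_strict)
  then show False using assms by (metis countable_insert)
qed

lemma mono_nat_eventually_constant:
  fixes f :: "'i::linorder \<Rightarrow> nat"
  assumes "\<not> countable (UNIV :: 'i set)" and "\<forall>b::'i. countable {a. a < b}" and "mono f"
  shows "\<exists>\<beta>\<ge>\<alpha>. \<forall>\<gamma>\<ge>\<beta>. f \<gamma> = f \<beta>"
proof -
  \<comment> \<open>a bound for chosen preimages of the countably many values of \<open>f\<close>\<close>
  define b where "b v = (SOME a. f a = v)" for v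
  have fb: "f (b (f \<delta>)) = f \<delta>" for \<delta> unfolding b_def by (rule someI_ex) blast
  have "countable (insert \<alpha> (b ` range f))" by simp
  then obtain \<gamma> where \<gamma>: "\<forall>x\<in>insert \<alpha> (b ` range f). x \<le> \<gamma>"
    using countable_set_bounded[OF assms(1,2)] by blast
  have le: "f \<delta> \<le> f \<gamma>" for \<delta>
  proof -
    have "f (b (f \<delta>)) \<le> f \<gamma>" using \<gamma> by (intro monoD[OF \<open>mono f\<close>]) blast
    then show ?thesis by (simp only: fb)
  qed
  have "f \<delta> = f \<gamma>" if "\<gamma> \<le> \<delta>" for \<delta>
    using le[of \<delta>] monoD[OF \<open>mono f\<close> that] by simp
  moreover have "\<alpha> \<le> \<gamma>" using \<gamma> by blast
  ultimately show ?thesis by blast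
qed

lemma no_coherent_coinfinite_injections:
  fixes Z :: "'i::linorder \<Rightarrow> 'i \<Rightarrow> nat option"
  assumes unc: "\<not> countable (UNIV :: 'i set)" and seg: "\<forall>b::'i. countable {a. a < b}"
    and Z: "\<And>\<gamma>. \<beta>\<^sub>0 \<le> \<gamma> \<Longrightarrow> Z \<gamma> \<in> coinfinite_injections \<gamma>"
    and coherent: "\<And>\<beta> \<gamma>. \<beta>\<^sub>0 \<le> \<beta> \<Longrightarrow> \<beta> \<le> \<gamma> \<Longrightarrow> restrict_below \<beta> (Z \<gamma>) = Z \<beta>"
  shows False
proof -
  have "\<exists>\<gamma>. \<delta> < \<gamma> \<and> \<beta>\<^sub>0 \<le> \<gamma>" for \<delta>
  proof -
    obtain \<gamma> where "max \<delta> \<beta>\<^sub>0 < \<gamma>" using exists_greater[OF unc seg] by blast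
    then show ?thesis by auto
  qed
  then have "\<exists>G. \<forall>\<delta>. \<delta> < G \<delta> \<and> \<beta>\<^sub>0 \<le> G \<delta>" by (intro choice allI)
  then obtain G where G: "\<And>\<delta>. \<delta> < G \<delta> \<and> \<beta>\<^sub>0 \<le> G \<delta>" by blast
  have stable: "Z (G \<delta>) \<delta> = Z \<gamma> \<delta>" if "G \<delta> \<le> \<gamma>" for \<delta> \<gamma>
  proof -
    have "restrict_below (G \<delta>) (Z \<gamma>) \<delta> = Z (G \<delta>) \<delta>" using coherent[of "G \<delta>" \<gamma>] G that by simp
    then show ?thesis using G by (simp add: restrict_below_def)
  qed
  \<comment> \<open>the union of the coherent family injects the whole index type into \<open>\<nat>\<close>\<close>
  have "inj (\<lambda>\<delta>. Z (G \<delta>) \<delta>)"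
  proof (rule injI)
    fix \<delta>\<^sub>1 \<delta>\<^sub>2 assume eq: "Z (G \<delta>\<^sub>1) \<delta>\<^sub>1 = Z (G \<delta>\<^sub>2) \<delta>\<^sub>2"
    define \<gamma> where "\<gamma> = max (G \<delta>\<^sub>1) (G \<delta>\<^sub>2)"
    have below: "\<delta>\<^sub>1 < \<gamma>" "\<delta>\<^sub>2 < \<gamma>" using G[of \<delta>\<^sub>1] G[of \<delta>\<^sub>2] by (auto simp: \<gamma>_def less_max_iff_disj)
    have "Z \<gamma> \<delta>\<^sub>1 = Z \<gamma> \<delta>\<^sub>2" using eq stable[of \<delta>\<^sub>1 \<gamma>] stable[of \<delta>\<^sub>2 \<gamma>] by (simp add: \<gamma>_def)
    moreover have "inj_on (Z \<gamma>) {a. a < \<gamma>}"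
      using Z[of \<gamma>] G[of \<delta>\<^sub>1] by (auto simp: coinfinite_injections_def \<gamma>_def le_max_iff_disj)
    ultimately show "\<delta>\<^sub>1 = \<delta>\<^sub>2" using below by (auto dest: inj_onD)
  qed
  then have "countable (UNIV :: 'i set)"
    by (rule countable_image_inj_on[OF countableI_type, of _ UNIV])
  with unc show False ..
qed

lemma coherent_lift:
  fixes S :: "'i::linorder \<Rightarrow> ('i \<Rightarrow> nat option) set"
  assumes bij: "\<And>i j. \<beta>\<^sub>1 \<le> i \<Longrightarrow> i \<le> j \<Longrightarrow>
                  restrict_below i ` S j = S i \<and> inj_on (restrict_below i) (S j)"
    and y: "y \<in> S \<beta>\<^sub>1"
  obtains Z where "\<And>\<gamma>. \<beta>\<^sub>1 \<le> \<gamma> \<Longrightarrow> Z \<gamma> \<in> S \<gamma>"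
    and "\<And>\<beta> \<gamma>. \<beta>\<^sub>1 \<le> \<beta> \<Longrightarrow> \<beta> \<le> \<gamma> \<Longrightarrow> restrict_below \<beta> (Z \<gamma>) = Z \<beta>"
proof
  have unique: "\<exists>!z. z \<in> S \<gamma> \<and> restrict_below \<beta>\<^sub>1 z = y" if "\<beta>\<^sub>1 \<le> \<gamma>" for \<gamma>
  proof -
    have img: "restrict_below \<beta>\<^sub>1 ` S \<gamma> = S \<beta>\<^sub>1" and inj: "inj_on (restrict_below \<beta>\<^sub>1) (S \<gamma>)"
      using bij[OF order.refl that] by blast+
    obtain z where "z \<in> S \<gamma>" "restrict_below \<beta>\<^sub>1 z = y" using y unfolding img[symmetric] by blast
    with inj show ?thesis by (auto simp: inj_on_def)
  qed
  define Z where "Z \<gamma> = (THE z. z \<in> S \<gamma> \<and> restrict_below \<beta>\<^sub>1 z = y)" for \<gamma>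
  have Z: "Z \<gamma> \<in> S \<gamma> \<and> restrict_below \<beta>\<^sub>1 (Z \<gamma>) = y" if "\<beta>\<^sub>1 \<le> \<gamma>" for \<gamma>
    unfolding Z_def by (rule theI'[OF unique[OF that]])
  then show "\<And>\<gamma>. \<beta>\<^sub>1 \<le> \<gamma> \<Longrightarrow> Z \<gamma> \<in> S \<gamma>" by blast
  fix \<beta> \<gamma> assume "\<beta>\<^sub>1 \<le> \<beta>" "\<beta> \<le> \<gamma>"
  then have "\<beta>\<^sub>1 \<le> \<gamma>" by (rule order.trans)
  have "restrict_below \<beta> (Z \<gamma>) \<in> S \<beta>" using bij[OF \<open>\<beta>\<^sub>1 \<le> \<beta>\<close> \<open>\<beta> \<le> \<gamma>\<close>] Z[OF \<open>\<beta>\<^sub>1 \<le> \<gamma>\<close>] by blast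
  moreover have "restrict_below \<beta>\<^sub>1 (restrict_below \<beta> (Z \<gamma>)) = y"
    using restrict_below_restrict_below[OF \<open>\<beta>\<^sub>1 \<le> \<beta>\<close>] Z[OF \<open>\<beta>\<^sub>1 \<le> \<gamma>\<close>] by simp
  ultimately show "restrict_below \<beta> (Z \<gamma>) = Z \<beta>"
    using unique[OF \<open>\<beta>\<^sub>1 \<le> \<beta>\<close>] Z[OF \<open>\<beta>\<^sub>1 \<le> \<beta>\<close>] by blast
qed

lemma compatible_finite_supports_empty:
  fixes S :: "'i::linorder \<Rightarrow> ('i \<Rightarrow> nat option) set"
  assumes unc: "\<not> countable (UNIV :: 'i set)" and seg: "\<forall>b::'i. countable {a. a < b}"
    and fin: "\<And>i. finite (S i)" and sub: "\<And>i. S i \<subseteq> coinfinite_injections i"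
    and lift: "\<And>i j. i \<le> j \<Longrightarrow> S i \<subseteq> restrict_below i ` S j"
  shows "S \<alpha> = {}"
proof (rule ccontr)
  assume "S \<alpha> \<noteq> {}"
  have "card (S i) \<le> card (S j)" if "i \<le> j" for i j
    using card_mono[OF finite_imageI[OF fin] lift[OF that]] card_image_le[OF fin] le_trans by blast
  then have "mono (\<lambda>i. card (S i))" by (rule monoI)
  then obtain \<beta>\<^sub>1 where "\<alpha> \<le> \<beta>\<^sub>1" and const: "\<And>\<gamma>. \<beta>\<^sub>1 \<le> \<gamma> \<Longrightarrow> card (S \<gamma>) = card (S \<beta>\<^sub>1)"
    using mono_nat_eventually_constant[OF unc seg] by blast
  \<comment> \<open>once the cardinalities are constant, the surjections \<open>S j \<rightarrow> S i\<close> are bijections\<close>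
  have bij: "restrict_below i ` S j = S i \<and> inj_on (restrict_below i) (S j)"
    if "\<beta>\<^sub>1 \<le> i" "i \<le> j" for i j
  proof
    have same: "card (S j) = card (S i)" using const that by (metis order.trans)
    then have "card (restrict_below i ` S j) \<le> card (S i)" using card_image_le[OF fin] by metis
    then show "restrict_below i ` S j = S i"
      using card_seteq[OF finite_imageI[OF fin] lift[OF that(2)]] by simp
    then show "inj_on (restrict_below i) (S j)" using same by (simp add: inj_on_iff_eq_card[OF fin])
  qed
  obtain y where "y \<in> S \<beta>\<^sub>1" using \<open>S \<alpha> \<noteq> {}\<close> lift[OF \<open>\<alpha> \<le> \<beta>\<^sub>1\<close>] by blast
  then obtain Z where "\<And>\<gamma>. \<beta>\<^sub>1 \<le> \<gamma> \<Longrightarrow> Z \<gamma> \<in> S \<gamma>"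
    and "\<And>\<beta> \<gamma>. \<beta>\<^sub>1 \<le> \<beta> \<Longrightarrow> \<beta> \<le> \<gamma> \<Longrightarrow> restrict_below \<beta> (Z \<gamma>) = Z \<beta>"
    using coherent_lift[OF bij] by blast
  with sub show False by (intro no_coherent_coinfinite_injections[OF unc seg]) blast+
qed

section \<open>Inverse systems\<close>

lemma lmod_hom_zero:
  assumes "abelian_group M" "abelian_group N" and f: "f \<in> lmod_hom R M N"
  shows "f \<zero>\<^bsub>M\<^esub> = \<zero>\<^bsub>N\<^esub>"
proof -
  interpret M: abelian_group M by fact
  interpret N: abelian_group N by fact
  have closed: "f \<zero>\<^bsub>M\<^esub> \<in> carrier N" using f by (auto simp: lmod_hom_def)
  have "f (\<zero>\<^bsub>M\<^esub> \<oplus>\<^bsub>M\<^esub> \<zero>\<^bsub>M\<^esub>) = f \<zero>\<^bsub>M\<^esub> \<oplus>\<^bsub>N\<^esub> f \<zero>\<^bsub>M\<^esub>"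
    using f M.zero_closed unfolding lmod_hom_def by blast
  then have "f \<zero>\<^bsub>M\<^esub> = f \<zero>\<^bsub>M\<^esub> \<oplus>\<^bsub>N\<^esub> f \<zero>\<^bsub>M\<^esub>" by simp
  then show ?thesis using N.add.l_cancel_one'[OF closed closed] by simp
qed

lemma zero_thread_in_inv_limit:
  assumes "inverse_system R D g"
  shows "(\<lambda>i. \<zero>\<^bsub>D i\<^esub>) \<in> inv_limit D g"
proof -
  have group: "abelian_group (D i)" for i
  proof -
    have "left_module R (D i)" using assms by (simp add: inverse_system_def)
    then show ?thesis by (rule left_module.axioms(2))
  qed
  have "g i j \<zero>\<^bsub>D j\<^esub> = \<zero>\<^bsub>D i\<^esub>" if "i \<le> j" for i j
  proof (rule lmod_hom_zero[OF group group])
    show "g i j \<in> lmod_hom R (D j) (D i)" using assms that by (simp add: inverse_system_def)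
  qed
  moreover have "\<zero>\<^bsub>D i\<^esub> \<in> carrier (D i)" for i
    using group[of i] by (simp add: abelian_group_def abelian_monoid.zero_closed)
  ultimately show ?thesis by (simp add: inv_limit_def)
qed

lemma inv_limit_zeroI:
  assumes "inverse_system R D g" and "\<And>x i. x \<in> inv_limit D g \<Longrightarrow> x i = \<zero>\<^bsub>D i\<^esub>"
  shows "inv_limit_zero D g"
  unfolding inv_limit_zero_def
proof
  show "inv_limit D g \<subseteq> {\<lambda>i. \<zero>\<^bsub>D i\<^esub>}"
  proof
    fix x assume "x \<in> inv_limit D g"
    then have "x = (\<lambda>i. \<zero>\<^bsub>D i\<^esub>)" using assms(2) by (intro ext)
    then show "x \<in> {\<lambda>i. \<zero>\<^bsub>D i\<^esub>}" by simp
  qed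
  show "{\<lambda>i. \<zero>\<^bsub>D i\<^esub>} \<subseteq> inv_limit D g" using zero_thread_in_inv_limit[OF assms(1)] by simp
qed

lemma surjective_system_mittag_leffler:
  assumes "\<And>i j. i \<le> j \<Longrightarrow> g i j ` carrier (D j) = carrier (D i)"
  shows "mittag_leffler D g"
  unfolding mittag_leffler_def
proof
  fix i
  have "\<forall>k\<ge>i. g i i ` carrier (D i) = g i k ` carrier (D k)" using assms by simp
  then show "\<exists>j\<ge>i. \<forall>k\<ge>j. g i j ` carrier (D j) = g i k ` carrier (D k)" by blast
qed

lemma surjective_system_not_strict_mittag_leffler:
  assumes "\<And>i j. i \<le> j \<Longrightarrow> g i j ` carrier (D j) = carrier (D i)"
    and "inv_limit_zero D g" and "\<And>i. carrier (D i) \<noteq> {\<zero>\<^bsub>D i\<^esub>}"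
  shows "\<not> strict_mittag_leffler D g"
proof
  fix i
  assume "strict_mittag_leffler D g"
  then obtain j where "i \<le> j" and strict: "g i j ` carrier (D j) = (\<lambda>x. x i) ` inv_limit D g"
    unfolding strict_mittag_leffler_def by blast
  have "carrier (D i) = g i j ` carrier (D j)" using assms(1)[OF \<open>i \<le> j\<close>] by (rule sym)
  also have "\<dots> = (\<lambda>x. x i) ` inv_limit D g" by (rule strict)
  also have "\<dots> = {\<zero>\<^bsub>D i\<^esub>}" using assms(2) by (simp add: inv_limit_zero_def)
  finally have "carrier (D i) = {\<zero>\<^bsub>D i\<^esub>}" .
  with assms(3) show False by (rule notE)
qed

context left_module
begin

lemma restriction_inverse_system:
  "inverse_system R (\<lambda>\<alpha>::'i::linorder. dsum_copies (coinfinite_injections \<alpha>) M)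
                    (\<lambda>\<alpha> \<beta>. pushforward M (restrict_below \<alpha>))"
  unfolding inverse_system_def
proof (intro conjI allI impI ballI left_module_dsum)
  fix \<alpha> \<beta> :: 'i assume "\<alpha> \<le> \<beta>"
  then show "pushforward M (restrict_below \<alpha>) \<in>
      lmod_hom R (dsum_copies (coinfinite_injections \<beta>) M) (dsum_copies (coinfinite_injections \<alpha>) M)"
    by (intro pushforward_lmod_hom restrict_below_in_coinfinite_injections)
next
  fix \<alpha> :: 'i and h assume h: "h \<in> carrier (dsum_copies (coinfinite_injections \<alpha>) M)"
  show "pushforward M (restrict_below \<alpha>) h = h"
    using dsum_support[OF h] restrict_below_coinfinite_injection
    by (intro M.pushforward_fixing_support finsupp_dsum[OF h]) blast
next
  fix \<alpha> \<beta> \<gamma> :: 'i and h assume "\<alpha> \<le> \<beta>" and h: "h \<in> carrier (dsum_copies (coinfinite_injections \<gamma>) M)"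
  have "pushforward M (restrict_below \<alpha>) (pushforward M (restrict_below \<beta>) h) =
      pushforward M (restrict_below \<alpha> \<circ> restrict_below \<beta>) h"
    by (rule ext) (rule M.pushforward_pushforward[OF finsupp_dsum[OF h]])
  also have "restrict_below \<alpha> \<circ> restrict_below \<beta> = restrict_below \<alpha>"
    using restrict_below_restrict_below[OF \<open>\<alpha> \<le> \<beta>\<close>] by auto
  finally show "pushforward M (restrict_below \<alpha>) (pushforward M (restrict_below \<beta>) h) =
      pushforward M (restrict_below \<alpha>) h" .
qed

lemma restriction_onto:
  assumes "\<alpha> \<le> \<beta>" and "countable {a. a < \<beta>}"
  shows "pushforward M (restrict_below \<alpha>) ` carrier (dsum_copies (coinfinite_injections \<beta>) M) =
         carrier (dsum_copies (coinfinite_injections \<alpha>) M)"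
  using assms
  by (intro pushforward_onto_dsum restrict_below_in_coinfinite_injections coinfinite_injection_extends)

lemma restriction_thread_zero:
  assumes unc: "\<not> countable (UNIV :: 'i::linorder set)" and seg: "\<forall>b::'i. countable {a. a < b}"
    and x: "x \<in> inv_limit (\<lambda>\<alpha>::'i. dsum_copies (coinfinite_injections \<alpha>) M)
                           (\<lambda>\<alpha> \<beta>. pushforward M (restrict_below \<alpha>))"
  shows "x \<alpha> = (\<lambda>_. \<zero>\<^bsub>M\<^esub>)"
proof -
  define S where "S i = {z. x i z \<noteq> \<zero>\<^bsub>M\<^esub>}" for i
  have carrier: "x i \<in> carrier (dsum_copies (coinfinite_injections i) M)" for i
    using x by (simp add: inv_limit_def)
  have "S \<alpha> = {}"
  proof (rule compatible_finite_supports_empty[OF unc seg])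
    show "finite (S i)" for i using carrier[of i] by (simp add: S_def dsum_carrier)
    show "S i \<subseteq> coinfinite_injections i" for i using dsum_support[OF carrier] by (auto simp: S_def)
    show "S i \<subseteq> restrict_below i ` S j" if "i \<le> j" for i j
      using M.pushforward_support[of "restrict_below i" "x j"] x that by (simp add: S_def inv_limit_def)
  qed
  then show ?thesis by (auto simp: S_def)
qed

lemma restriction_inv_limit_zero:
  assumes "\<not> countable (UNIV :: 'i::linorder set)" and "\<forall>b::'i. countable {a. a < b}"
  shows "inv_limit_zero (\<lambda>\<alpha>::'i. dsum_copies (coinfinite_injections \<alpha>) M)
                        (\<lambda>\<alpha> \<beta>. pushforward M (restrict_below \<alpha>))"
  using restriction_thread_zero[OF assms]
  by (intro inv_limit_zeroI[OF restriction_inverse_system]) simp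

end

theorem mainTheorem3:
  fixes R :: "('a, 'r) ring_scheme"
    and M :: "('a, 'm, 'e) module_scheme"
    and idx :: "'i::wellorder itself"
  assumes "left_module R M"
    and omega1_uncountable: "\<not> countable (UNIV :: 'i set)"
    and omega1_segments: "\<forall>b::'i. countable {a. a < b}"
  shows "\<exists>(X :: 'i \<Rightarrow> ('i \<Rightarrow> nat option) set) (g :: 'i \<Rightarrow> 'i \<Rightarrow> (('i \<Rightarrow> nat option) \<Rightarrow> 'm) \<Rightarrow> (('i \<Rightarrow> nat option) \<Rightarrow> 'm)).
           inverse_system R (\<lambda>\<alpha>. dsum_copies (X \<alpha>) M) g
         \<and> (\<forall>\<alpha> \<beta>. \<alpha> \<le> \<beta> \<longrightarrow> g \<alpha> \<beta> ` carrier (dsum_copies (X \<beta>) M) = carrier (dsum_copies (X \<alpha>) M))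
         \<and> inv_limit_zero (\<lambda>\<alpha>. dsum_copies (X \<alpha>) M) g
         \<and> (carrier M \<noteq> {\<zero>\<^bsub>M\<^esub>} \<longrightarrow>
              mittag_leffler (\<lambda>\<alpha>. dsum_copies (X \<alpha>) M) g
            \<and> \<not> strict_mittag_leffler (\<lambda>\<alpha>. dsum_copies (X \<alpha>) M) g)"
proof -
  interpret left_module R M by fact
  let ?D = "\<lambda>\<alpha>::'i. dsum_copies (coinfinite_injections \<alpha>) M"
    and ?g = "\<lambda>\<alpha> \<beta>::'i. pushforward M (restrict_below \<alpha>)"
  have system: "inverse_system R ?D ?g" by (rule restriction_inverse_system)
  have onto: "?g \<alpha> \<beta> ` carrier (?D \<beta>) = carrier (?D \<alpha>)" if "\<alpha> \<le> \<beta>" for \<alpha> \<beta>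
    using that omega1_segments by (intro restriction_onto) blast+
  have limit_zero: "inv_limit_zero ?D ?g"
    using omega1_uncountable omega1_segments by (rule restriction_inv_limit_zero)
  have "mittag_leffler ?D ?g \<and> \<not> strict_mittag_leffler ?D ?g" if "carrier M \<noteq> {\<zero>\<^bsub>M\<^esub>}"
  proof -
    have "carrier (?D \<alpha>) \<noteq> {\<zero>\<^bsub>?D \<alpha>\<^esub>}" for \<alpha>
    proof -
      obtain f where "f \<in> coinfinite_injections \<alpha>"
        using coinfinite_injections_nonempty omega1_segments by blast
      then show ?thesis using that by (rule dsum_nontrivial)
    qed
    with onto limit_zero show ?thesis
      by (simp add: surjective_system_mittag_leffler surjective_system_not_strict_mittag_leffler)
  qed
  with system onto limit_zero show ?thesis by (intro exI[of _ coinfinite_injections] exI[of _ ?g]) blast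
qed

end
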